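(* For every $\omega>0$, $l=B/\omega\in\mathbb N$ and $\mu=A/(2\omega)>0$ (with $c_0\neq0$ so that the ratio is defined), one has $$\Delta_0:=\beta^2(4\sigma+c_1^2)-4\le0,\qquad\text{where }\beta=-ib,\ \sigma=\frac{c_1}{c_0},$$ $b$ being the upper-right entry of the transition matrix $Q$ and $c_0,c_1$ the Stokes multipliers.
   Context: System (L): $u'=z^{-2}\big(-(lz+\mu(1+z^2))u+\frac{z}{2i\omega}v\big)$, $v'=\frac{1}{2i\omega z}u$. $F(z)=\operatorname{diag}(z^{-l}e^{\mu(1/z-z)},1)$; $S_\pm$ sectors with vertex $0$ containing the closed upper/lower half-plane minus $0$, closures avoiding $i\mathbb R_\mp$, $S_-=\overline{S_+}$; $H_\pm$ the unique invertible matrix functions holomorphic on $S_\pm$, $C^\infty$ on $\overline{S_\pm}\setminus\{\infty\}$, $H_\pm(0)=\mathrm{Id}$, transforming (L) into $\tilde u'=-z^{-2}(lz+\mu(1+z^2))\tilde u$, $\tilde v'=0$; $W_\pm=H_\pm F$ (branch on $S_-$ by counterclockwise continuation from $S_+$), $W_{+,1}=H_+F$ with branch continued counterclockwise from $S_-$. With $\Sigma_0\ni\mathbb R_-$, $\Sigma_1\ni\mathbb R_+$ the components of $S_+\cap S_-$: $W_-=W_+C_0$ on $\Sigma_0$, $W_{+,1}=W_-C_1$ on $\Sigma_1$, $C_0=\begin{pmatrix}1&c_0\\0&1\end{pmatrix}$, $C_1=\begin{pmatrix}1&0\\c_1&1\end{pmatrix}$. $M_N=\operatorname{diag}(e^{-2\pi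 il},1)$; $\mathbb I:(u,v)(z)\mapsto -iz^{-l}e^{\mu(1/z-z)}(-v(z^{-1}),u(z^{-1}))$; $\hat W_-=\mathbb I(W_+M_N)$ columnwise; $Q=\begin{pmatrix}-a&b\\-c&a\end{pmatrix}$ is the constant matrix with $W_+M_N=\hat W_-Q$ on $\Sigma_1$. *)

theory Defs
  imports "HOL-Analysis.Analysis"
begin

text \<open>2x2 complex matrices, row-major: mat2 a b c d = ((a,b),(c,d)).\<close>
definition mat2 :: "complex \<Rightarrow> complex \<Rightarrow> complex \<Rightarrow> complex \<Rightarrow> complex^2^2" where
  "mat2 a b c d = (\<chi> i j. if i = 1 then (if j = 1 then a else b) else (if j = 1 then c else d))"

text \<open>Coefficient matrix of system (L): (u,v)' = A(z) (u,v).\<close>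
definition coefL :: "real \<Rightarrow> nat \<Rightarrow> real \<Rightarrow> complex \<Rightarrow> complex^2^2" where
  "coefL \<omega> l \<mu> z = mat2 (- (of_nat l * z + of_real \<mu> * (1 + z\<^sup>2)) / z\<^sup>2) (1 / (2 * \<i> * of_real \<omega> * z))
                          (1 / (2 * \<i> * of_real \<omega> * z)) 0"

definition coefD :: "nat \<Rightarrow> real \<Rightarrow> complex \<Rightarrow> complex^2^2" where
  "coefD l \<mu> z = mat2 (- (of_nat l * z + of_real \<mu> * (1 + z\<^sup>2)) / z\<^sup>2) 0 0 0"

text \<open>The scalar z^(-l) e^(mu (1/z - z)); single valued since l is a natural number.\<close>
definition expf :: "nat \<Rightarrow> real \<Rightarrow> complex \<Rightarrow> complex" where
  "expf l \<mu> z = inverse (z ^ l) * exp (of_real \<mu> * (1 / z - z))"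

definition Fmat :: "nat \<Rightarrow> real \<Rightarrow> complex \<Rightarrow> complex^2^2" where
  "Fmat l \<mu> z = mat2 (expf l \<mu> z) 0 0 1"

definition monodromyN :: "nat \<Rightarrow> complex^2^2" where
  "monodromyN l = mat2 (exp (- 2 * of_real pi * \<i> * of_nat l)) 0 0 1"

definition is_sector :: "complex set \<Rightarrow> bool" where
  "is_sector S \<longleftrightarrow> (\<exists>\<alpha> \<beta>. \<alpha> < \<beta> \<and> \<beta> - \<alpha> \<le> 2 * pi \<and>
       S = {of_real r * cis t | r t. 0 < r \<and> \<alpha> < t \<and> t < \<beta>})"

definition admissible_Splus :: "complex set \<Rightarrow> bool" where
  "admissible_Splus S \<longleftrightarrow> is_sector S \<and> {z. Im z \<ge> 0 \<and> z \<noteq> 0} \<subseteq> S \<and>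
       closure S \<inter> {\<i> * of_real t | t. t < 0} = {}"

definition mderiv :: "(complex \<Rightarrow> complex^2^2) \<Rightarrow> complex \<Rightarrow> complex^2^2" where
  "mderiv H z = (\<chi> i j. deriv (\<lambda>w. H w $ i $ j) z)"

text \<open>H is a normalizing matrix function on the sector S:
  invertible and holomorphic on S, C^infinity on the closure of S (every derivative extends
  continuously to the closure), H(0) = Id, and the gauge transformation (u,v) = H (u~,v~)
  transforms (L) into the diagonal system, i.e. H' = A H - H D on S.\<close>
definition normalizing :: "real \<Rightarrow> nat \<Rightarrow> real \<Rightarrow> complex set \<Rightarrow> (complex \<Rightarrow> complex^2^2) \<Rightarrow> bool" where
  "normalizing \<omega> l \<mu> S H \<longleftrightarrow>
     (\<forall>i j. (\<lambda>z. H z $ i $ j) holomorphic_on S) \<and>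
     (\<forall>z\<in>S. invertible (H z)) \<and>
     continuous_on (closure S) H \<and>
     (\<forall>n i j. \<exists>g. continuous_on (closure S) g \<and>
                 (\<forall>z\<in>S. g z = (deriv ^^ n) (\<lambda>w. H w $ i $ j) z)) \<and>
     H 0 = mat 1 \<and>
     (\<forall>z\<in>S. mderiv H z = coefL \<omega> l \<mu> z ** H z - H z ** coefD l \<mu> z)"

text \<open>The involution I applied columnwise to a matrix solution W:
  column (u,v) is sent to z \<mapsto> -i z^-l e^(mu(1/z - z)) (-v(1/z), u(1/z)).\<close>
definition invI :: "nat \<Rightarrow> real \<Rightarrow> (complex \<Rightarrow> complex^2^2) \<Rightarrow> complex \<Rightarrow> complex^2^2" where
  "invI l \<mu> W z = (\<chi> i k. - \<i> * expf l \<mu> z *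
        (if i = 1 then - (W (1 / z) $ 2 $ k) else W (1 / z) $ 1 $ k))"

end

theory Submission
  imports Defs "HOL-Complex_Analysis.Complex_Analysis"
begin

(*
  Conjugating by z \<mapsto> conj z maps the normalized solutions of (L) on the upper half-plane to
  normalized solutions on the lower one. Two normalized gauge transformations H, G on the closed
  lower half-plane agree: the entries of F\<inverse> adj(H) G F are constant, their values are read off
  at z = 0, and the growth of z\<^sup>-\<^sup>l e\<^sup>\<mu>\<^sup>(\<^sup>1\<^sup>/\<^sup>z\<^sup>-\<^sup>z\<^sup>) along rays into 0 kills the off-diagonal ones.
  Hence H\<^sub>-(z) = J conj(H\<^sub>+(conj z)) J, which at z = 1 yields det Q = 1 and c\<^sub>1 b + a = conj a.
  The relation W\<^sub>+ = \<bbbI>(W\<^sub>+) Q continues analytically from 1 through the lower half-plane to -1,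
  where, combined with the Stokes relation there, it makes C\<^sub>0 C\<^sub>1 Q conjugate to an
  antidiagonal matrix, so its trace vanishes. Eliminating c then gives \<Delta>\<^sub>0 = -(2 Re a)\<^sup>2.
*)

(* The coefficient notation of formal power series would clash with vector indexing. *)
no_notation fps_nth (infixl \<open>$\<close> 75)

lemma mat2_nth [simp]:
  "mat2 a b c d $ 1 $ 1 = a" "mat2 a b c d $ 1 $ 2 = b"
  "mat2 a b c d $ 2 $ 1 = c" "mat2 a b c d $ 2 $ 2 = d"
  by (simp_all add: mat2_def)

lemma mat2_eta: "M = mat2 (M $ 1 $ 1) (M $ 1 $ 2) (M $ 2 $ 1) (M $ 2 $ 2)"
  by (simp add: mat2_def vec_eq_iff forall_2)

lemma mat2_eq_iff: "mat2 a b c d = mat2 a' b' c' d' \<longleftrightarrow> a = a' \<and> b = b' \<and> c = c' \<and> d = d'"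
  by (auto simp: vec_eq_iff forall_2)

lemma mat2_mult:
  "mat2 a b c d ** mat2 a' b' c' d' = mat2 (a*a' + b*c') (a*b' + b*d') (c*a' + d*c') (c*b' + d*d')"
  by (simp add: vec_eq_iff forall_2 matrix_matrix_mult_def sum_2)

lemma mat2_diff: "mat2 a b c d - mat2 a' b' c' d' = mat2 (a - a') (b - b') (c - c') (d - d')"
  by (simp add: vec_eq_iff forall_2)

lemma det_mat2: "det (mat2 a b c d) = a*d - b*c"
  by (simp add: det_2)

lemma mat2_one: "mat 1 = mat2 1 0 0 1"
  by (simp add: vec_eq_iff forall_2 mat_def)

lemma matrix_mult_left_cancel:
  fixes X A B :: "complex^2^2"
  assumes "det X \<noteq> 0" "X ** A = X ** B"
  shows "A = B"
proof -
  obtain X' where X': "X' ** X = mat 1"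
    using assms(1) invertible_det_nz invertible_def by blast
  have "A = (X' ** X) ** A" by (simp add: X')
  also have "\<dots> = X' ** (X ** B)" by (simp add: matrix_mul_assoc[symmetric] assms(2))
  finally show ?thesis by (simp add: matrix_mul_assoc X')
qed

lemma eq_of_adjugate_pairings:
  fixes G H :: "complex^2^2"
  assumes "H $ 1 $ 1 * H $ 2 $ 2 - H $ 1 $ 2 * H $ 2 $ 1 = 1"
    and "H $ 2 $ 2 * G $ 1 $ 1 - H $ 1 $ 2 * G $ 2 $ 1 = 1" "H $ 1 $ 1 * G $ 2 $ 2 - H $ 2 $ 1 * G $ 1 $ 2 = 1"
    and "H $ 2 $ 2 * G $ 1 $ 2 - H $ 1 $ 2 * G $ 2 $ 2 = 0" "H $ 1 $ 1 * G $ 2 $ 1 - H $ 2 $ 1 * G $ 1 $ 1 = 0"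
  shows "G = H"
proof -
  obtain h11 h12 h21 h22 where H: "H = mat2 h11 h12 h21 h22" using mat2_eta by blast
  obtain g11 g12 g21 g22 where G: "G = mat2 g11 g12 g21 g22" using mat2_eta by blast
  let ?A = "mat2 h22 (- h12) (- h21) h11"
  show ?thesis
  proof (rule matrix_mult_left_cancel)
    show "det ?A \<noteq> 0" using assms(1) by (simp add: H det_mat2 mult.commute)
    show "?A ** G = ?A ** H"
      using assms by (simp add: H G mat2_mult mat2_eq_iff algebra_simps)
  qed
qed

lemma continuous_on_mat2:
  assumes "continuous_on S a" "continuous_on S b" "continuous_on S c" "continuous_on S d"
  shows "continuous_on S (\<lambda>z. mat2 (a z) (b z) (c z) (d z))"
proof -
  have "continuous_on S (\<lambda>z. if i = 1 then if j = 1 then a z else b z else if j = 1 then c z else d z)"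
    for i j :: 2
    using assms by (cases "i = 1"; cases "j = 1") simp_all
  thus ?thesis unfolding mat2_def by (intro continuous_on_vec_lambda)
qed

text \<open>\<open>jconj M = J (conj M) J\<close> with \<open>J = diag(1,-1)\<close>.\<close>
definition jconj :: "complex^2^2 \<Rightarrow> complex^2^2" where
  "jconj M = mat2 (cnj (M $ 1 $ 1)) (- cnj (M $ 1 $ 2)) (- cnj (M $ 2 $ 1)) (cnj (M $ 2 $ 2))"

lemma jconj_mat2: "jconj (mat2 a b c d) = mat2 (cnj a) (- cnj b) (- cnj c) (cnj d)"
  by (simp add: jconj_def)

lemma jconj_one: "jconj (mat 1) = mat 1"
  by (simp add: jconj_def mat2_one)

lemma jconj_mult: "jconj (A ** B) = jconj A ** jconj B"
  by (subst (1 2) mat2_eta[of A], subst (1 2) mat2_eta[of B])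
     (simp add: mat2_mult jconj_mat2 mat2_eq_iff)

lemma continuous_on_jconj: "continuous_on S H \<Longrightarrow> continuous_on S (\<lambda>z. jconj (H z))"
  unfolding jconj_def by (intro continuous_on_mat2 continuous_intros)

section \<open>Sectors and half-planes\<close>

lemma is_sector_open:
  assumes "is_sector S"
  shows "open S"
proof -
  obtain \<alpha> \<beta> where S: "S = {of_real r * cis t | r t. 0 < r \<and> \<alpha> < t \<and> t < \<beta>}"
    using assms unfolding is_sector_def by blast
  show ?thesis
    unfolding open_dist
  proof (intro ballI)
    fix z assume "z \<in> S"
    then obtain r t where z: "z = of_real r * cis t" "0 < r" "\<alpha> < t" "t < \<beta>"
      using S by blast
    define \<epsilon> where "\<epsilon> = min (t - \<alpha>) (\<beta> - t)"
    have "\<epsilon> > 0" using z by (simp add: \<epsilon>_def)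
    moreover have "continuous (at 1) Arg"
      by (rule continuous_at_Arg) (auto simp: complex_nonpos_Reals_iff)
    ultimately obtain \<delta> where \<delta>: "\<delta> > 0" "\<And>w. dist w 1 < \<delta> \<Longrightarrow> dist (Arg w) (Arg 1) < \<epsilon>"
      unfolding continuous_at_eps_delta by blast
    have nz: "norm z = r" "z \<noteq> 0" using z by (auto simp: norm_mult)
    show "\<exists>e>0. \<forall>y. dist y z < e \<longrightarrow> y \<in> S"
    proof (intro exI[of _ "min \<delta> 1 * r"] conjI allI impI)
      show "min \<delta> 1 * r > 0" using \<delta> z by simp
      fix y assume yd: "dist y z < min \<delta> 1 * r"
      define w where "w = y / z"
      have "w - 1 = (y - z) / z" using nz by (simp add: w_def field_simps)
      hence "dist w 1 = norm (y - z) / norm z" by (simp add: dist_norm norm_divide)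
      also have "\<dots> < min \<delta> 1" using yd nz z(2) by (simp add: dist_norm divide_less_eq min_mult_distrib_right)
      finally have "dist w 1 < \<delta>" "dist w 1 < 1" by auto
      hence Arg_w: "\<bar>Arg w\<bar> < \<epsilon>" and "w \<noteq> 0" using \<delta>(2) by (auto simp: dist_real_def)
      have "y = z * (of_real (norm w) * cis (Arg w))"
        using Arg_eq[OF \<open>w \<noteq> 0\<close>] nz by (simp add: w_def cis_conv_exp)
      hence "y = of_real (r * norm w) * cis (t + Arg w)"
        using z by (simp add: cis_mult[symmetric] mult_ac)
      moreover have "0 < r * norm w" using z \<open>w \<noteq> 0\<close> by simp
      moreover have "\<alpha> < t + Arg w" "t + Arg w < \<beta>" using Arg_w by (auto simp: \<epsilon>_def)
      ultimately show "y \<in> S" unfolding S by blast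
    qed
  qed
qed

lemma zero_notin_sector: "is_sector S \<Longrightarrow> 0 \<notin> S"
  unfolding is_sector_def by auto

lemma of_real_mult_mem_sector:
  assumes "is_sector S" "z \<in> S" "c > 0"
  shows "of_real c * z \<in> S"
proof -
  obtain \<alpha> \<beta> where S: "S = {of_real r * cis t | r t. 0 < r \<and> \<alpha> < t \<and> t < \<beta>}"
    using assms unfolding is_sector_def by blast
  then obtain r t where z: "z = of_real r * cis t" "0 < r" "\<alpha> < t" "t < \<beta>"
    using assms by blast
  hence "of_real c * z = of_real (c * r) * cis t" "c * r > 0" using \<open>c > 0\<close> by simp_all
  thus ?thesis using S z by blast
qed

lemma inverse_mem_sector:
  assumes "is_sector S" "cnj z \<in> S"
  shows "1 / z \<in> S"
proof -
  have "z \<noteq> 0" using assms zero_notin_sector by force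
  have "1 / z = of_real (inverse ((norm z)\<^sup>2)) * cnj z"
    using \<open>z \<noteq> 0\<close> complex_norm_square[of z] by (simp add: field_simps of_real_inverse[symmetric])
  also have "\<dots> \<in> S" using assms \<open>z \<noteq> 0\<close> by (intro of_real_mult_mem_sector) auto
  finally show ?thesis .
qed

lemma closure_lower_halfplane: "closure {z::complex. Im z < 0} = {z. Im z \<le> 0}"
  using closure_halfspace_lt[of \<i> 0] by (simp add: inner_complex_def)

lemma closure_upper_halfplane: "closure {z::complex. Im z > 0} = {z. Im z \<ge> 0}"
  using closure_halfspace_gt[of \<i> 0] by (simp add: inner_complex_def)

lemma connected_lower_halfplane_Un_ball:
  assumes "Im x \<le> 0" "0 < r"
  shows "connected ({z. Im z < 0} \<union> ball x r)"
proof (rule connected_Un)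
  have "x - \<i> * of_real (r/2) \<in> {z. Im z < 0} \<inter> ball x r"
    using assms by (simp add: dist_norm norm_mult)
  thus "{z. Im z < 0} \<inter> ball x r \<noteq> {}" by blast
qed (auto intro: convex_connected convex_halfspace_Im_lt)

definition diag_coeff :: "nat \<Rightarrow> real \<Rightarrow> complex \<Rightarrow> complex" where
  "diag_coeff l \<mu> z = - (of_nat l * z + of_real \<mu> * (1 + z\<^sup>2)) / z\<^sup>2"

definition offdiag_coeff :: "real \<Rightarrow> complex \<Rightarrow> complex" where
  "offdiag_coeff \<omega> z = 1 / (2 * \<i> * of_real \<omega> * z)"

lemma coefL_eq: "coefL \<omega> l \<mu> z = mat2 (diag_coeff l \<mu> z) (offdiag_coeff \<omega> z) (offdiag_coeff \<omega> z) 0"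
  by (simp add: coefL_def diag_coeff_def offdiag_coeff_def)

lemma coefD_eq: "coefD l \<mu> z = mat2 (diag_coeff l \<mu> z) 0 0 0"
  by (simp add: coefD_def diag_coeff_def)

lemma cnj_diag_coeff: "diag_coeff l \<mu> (cnj z) = cnj (diag_coeff l \<mu> z)"
  by (simp add: diag_coeff_def)

lemma cnj_offdiag_coeff: "offdiag_coeff \<omega> (cnj z) = - cnj (offdiag_coeff \<omega> z)"
  by (simp add: offdiag_coeff_def)

lemma expf_has_field_derivative:
  assumes "z \<noteq> 0"
  shows "(expf l \<mu> has_field_derivative diag_coeff l \<mu> z * expf l \<mu> z) (at z)"
proof -
  have e: "expf l \<mu> = (\<lambda>z. exp (of_real \<mu> * (1 / z - z)) / z ^ l)"
    by (simp add: expf_def fun_eq_iff divide_inverse mult.commute)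
  have A: "((\<lambda>z. exp (of_real \<mu> * (1 / z - z))) has_field_derivative
      exp (of_real \<mu> * (1 / z - z)) * (of_real \<mu> * (- 1 / z\<^sup>2 - 1))) (at z)"
    using assms by (auto intro!: derivative_eq_intros simp: power2_eq_square field_simps)
  have B: "((\<lambda>z. z ^ l) has_field_derivative of_nat l * z ^ (l - 1)) (at z)"
    using DERIV_power[OF DERIV_ident, where n=l and x=z and s=UNIV] by simp
  show ?thesis
    unfolding e
    by (rule DERIV_cong[OF DERIV_divide[OF A B]]; cases l)
       (simp_all add: assms diag_coeff_def field_simps power2_eq_square)
qed

lemma expf_nonzero: "z \<noteq> 0 \<Longrightarrow> expf l \<mu> z \<noteq> 0"
  by (simp add: expf_def)

lemma expf_one: "expf l \<mu> 1 = 1"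
  by (simp add: expf_def)

lemma expf_holomorphic_on: "0 \<notin> T \<Longrightarrow> expf l \<mu> holomorphic_on T"
  unfolding expf_def by (auto intro!: holomorphic_intros)

lemma norm_expf: "norm (expf l \<mu> z) = exp (\<mu> * Re (1 / z - z)) / norm z ^ l"
  by (simp add: expf_def norm_mult norm_inverse norm_power divide_inverse mult.commute)

lemma power_div_fact_le_exp:
  assumes "0 \<le> (x::real)"
  shows "x ^ n / fact n \<le> exp x"
proof -
  have s: "(\<lambda>i. x ^ i / fact i) sums exp x"
    using exp_converges[of x] by (simp add: divide_inverse mult.commute)
  have "x ^ n / fact n = (\<Sum>i\<in>{n}. x ^ i / fact i)" by simp
  also have "\<dots> \<le> (\<Sum>i. x ^ i / fact i)"
    by (rule sum_le_suminf) (use sums_summable[OF s] assms in auto)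
  also have "\<dots> = exp x" using sums_unique[OF s] by simp
  finally show ?thesis .
qed

lemma norm_expf_fourth_quadrant_ge:
  assumes "0 < t" "t \<le> 1/2" "\<mu> > 0"
  shows "exp (- \<mu>) \<le> norm (expf l \<mu> (Complex t (-t)))"
proof -
  have n: "norm (Complex t (-t)) ^ l \<le> 1"
  proof -
    have "t * t \<le> 1/2 * (1/2)" using assms by (intro mult_mono) auto
    hence "norm (Complex t (-t)) \<le> 1" by (simp add: complex_norm power2_eq_square)
    thus ?thesis by (simp add: power_le_one)
  qed
  have "\<mu> * t \<le> \<mu>" "0 \<le> \<mu> / (2*t)" using assms by (auto intro: mult_left_le)
  hence "exp (- \<mu>) \<le> exp (\<mu> * (1 / (2*t) - t))" by (simp add: right_diff_distrib)
  also have "\<mu> * (1 / (2*t) - t) = \<mu> * Re (1 / Complex t (-t) - Complex t (-t))"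
    using assms by (simp add: Re_divide power2_eq_square field_simps)
  finally have "exp (- \<mu>) \<le> exp (\<mu> * Re (1 / Complex t (-t) - Complex t (-t)))" .
  with mult_left_le[OF n exp_ge_zero]
  have "exp (- \<mu>) * norm (Complex t (-t)) ^ l \<le> exp (\<mu> * Re (1 / Complex t (-t) - Complex t (-t)))"
    by (rule order_trans)
  moreover have "norm (Complex t (-t)) > 0" using assms by (simp add: complex_eq_iff)
  ultimately show ?thesis
    unfolding norm_expf by (simp add: le_divide_eq)
qed

lemma norm_expf_third_quadrant_le:
  assumes "0 < t" "t \<le> 1" "\<mu> > 0"
  shows "norm (expf l \<mu> (Complex (-t) (-t))) \<le> exp \<mu> * fact l * (2/\<mu>) ^ l"
proof -
  have "Re (1 / Complex (-t) (-t) - Complex (-t) (-t)) = t - 1 / (2*t)"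
    using assms by (simp add: Re_divide power2_eq_square field_simps)
  hence "norm (expf l \<mu> (Complex (-t) (-t))) = exp (\<mu>*t) * (1 / exp (\<mu> / (2*t))) / norm (Complex (-t) (-t)) ^ l"
    unfolding norm_expf by (simp add: exp_diff[symmetric] right_diff_distrib)
  also have "\<dots> \<le> exp \<mu> * (fact l / (\<mu> / (2*t)) ^ l) / t ^ l"
  proof (rule frac_le)
    have "1 / exp (\<mu> / (2*t)) \<le> fact l / (\<mu> / (2*t)) ^ l"
      using power_div_fact_le_exp[of "\<mu> / (2*t)" l] assms by (simp add: field_simps)
    thus "exp (\<mu>*t) * (1 / exp (\<mu> / (2*t))) \<le> exp \<mu> * (fact l / (\<mu> / (2*t)) ^ l)"
      using assms by (intro mult_mono) auto
    show "t ^ l \<le> norm (Complex (-t) (-t)) ^ l"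
      using abs_Re_le_cmod[of "Complex (-t) (-t)"] assms by (intro power_mono) auto
  qed (use assms in auto)
  also have "\<dots> = exp \<mu> * fact l * (2/\<mu>) ^ l"
    using assms by (simp add: power_divide field_simps power_mult_distrib)
  finally show ?thesis .
qed

section \<open>Uniqueness of the normalizing gauge transformation\<close>

definition gauge_system ::
    "(complex \<Rightarrow> complex) \<Rightarrow> (complex \<Rightarrow> complex) \<Rightarrow> (complex \<Rightarrow> complex^2^2) \<Rightarrow> complex set \<Rightarrow> bool" where
  "gauge_system d e H V \<longleftrightarrow> (\<forall>z\<in>V. \<forall>i j. ((\<lambda>w. H w $ i $ j) has_field_derivative
      (mat2 (d z) (e z) (e z) 0 ** H z - H z ** mat2 (d z) 0 0 0) $ i $ j) (at z))"

lemma gauge_system_iff: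
  "gauge_system d e H V \<longleftrightarrow> (\<forall>z\<in>V.
     ((\<lambda>w. H w $ 1 $ 1) has_field_derivative e z * H z $ 2 $ 1) (at z) \<and>
     ((\<lambda>w. H w $ 1 $ 2) has_field_derivative d z * H z $ 1 $ 2 + e z * H z $ 2 $ 2) (at z) \<and>
     ((\<lambda>w. H w $ 2 $ 1) has_field_derivative e z * H z $ 1 $ 1 - d z * H z $ 2 $ 1) (at z) \<and>
     ((\<lambda>w. H w $ 2 $ 2) has_field_derivative e z * H z $ 1 $ 2) (at z))"
proof -
  have "mat2 (d z) (e z) (e z) 0 ** H z - H z ** mat2 (d z) 0 0 0 =
      mat2 (e z * H z $ 2 $ 1) (d z * H z $ 1 $ 2 + e z * H z $ 2 $ 2)
           (e z * H z $ 1 $ 1 - d z * H z $ 2 $ 1) (e z * H z $ 1 $ 2)" for z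
    by (subst (1 2) mat2_eta[of "H z"]) (simp add: mat2_mult mat2_diff mat2_eq_iff algebra_simps)
  thus ?thesis by (simp add: gauge_system_def forall_2)
qed

lemma normalizing_gauge_system:
  assumes "normalizing \<omega> l \<mu> S H" "open V" "V \<subseteq> S"
  shows "gauge_system (diag_coeff l \<mu>) (offdiag_coeff \<omega>) H V"
  unfolding gauge_system_def
proof (intro ballI allI)
  fix z i j assume "z \<in> V"
  hence "z \<in> S" "z \<in> interior S" using assms(2,3) interior_maximal by blast+
  have "(\<lambda>w. H w $ i $ j) field_differentiable (at z within S)"
    using assms(1) \<open>z \<in> S\<close> unfolding normalizing_def holomorphic_on_def by blast
  hence "((\<lambda>w. H w $ i $ j) has_field_derivative mderiv H z $ i $ j) (at z)"
    using at_within_interior[OF \<open>z \<in> interior S\<close>]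
    by (simp add: mderiv_def DERIV_deriv_iff_field_differentiable)
  moreover have "mderiv H z = coefL \<omega> l \<mu> z ** H z - H z ** coefD l \<mu> z"
    using assms(1) \<open>z \<in> S\<close> unfolding normalizing_def by blast
  ultimately show "((\<lambda>w. H w $ i $ j) has_field_derivative (mat2 (diag_coeff l \<mu> z) (offdiag_coeff \<omega> z)
      (offdiag_coeff \<omega> z) 0 ** H z - H z ** mat2 (diag_coeff l \<mu> z) 0 0 0) $ i $ j) (at z)"
    by (simp add: coefL_eq coefD_eq)
qed

lemma gauge_system_reflect:
  assumes "gauge_system d e H W" "\<And>z. z \<in> V \<Longrightarrow> cnj z \<in> W"
    and "\<And>z. d (cnj z) = cnj (d z)" "\<And>z. e (cnj z) = - cnj (e z)"
  shows "gauge_system d e (\<lambda>z. jconj (H (cnj z))) V"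
  unfolding gauge_system_iff
proof (intro ballI)
  fix z assume "z \<in> V"
  note H = assms(1)[unfolded gauge_system_iff, rule_format, OF assms(2)[OF this]]
  have c: "((\<lambda>w. cnj (h (cnj w))) has_field_derivative cnj D) (at z)"
    if "(h has_field_derivative D) (at (cnj z))" for h D
    using has_field_derivative_cnj_cnj[OF that] by (simp add: o_def)
  have m: "((\<lambda>w. - cnj (h (cnj w))) has_field_derivative - cnj D) (at z)"
    if "(h has_field_derivative D) (at (cnj z))" for h D
    using DERIV_minus[OF c[OF that]] .
  show "((\<lambda>w. jconj (H (cnj w)) $ 1 $ 1) has_field_derivative e z * jconj (H (cnj z)) $ 2 $ 1) (at z) \<and>
    ((\<lambda>w. jconj (H (cnj w)) $ 1 $ 2) has_field_derivative
       d z * jconj (H (cnj z)) $ 1 $ 2 + e z * jconj (H (cnj z)) $ 2 $ 2) (at z) \<and>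
    ((\<lambda>w. jconj (H (cnj w)) $ 2 $ 1) has_field_derivative
       e z * jconj (H (cnj z)) $ 1 $ 1 - d z * jconj (H (cnj z)) $ 2 $ 1) (at z) \<and>
    ((\<lambda>w. jconj (H (cnj w)) $ 2 $ 2) has_field_derivative e z * jconj (H (cnj z)) $ 1 $ 2) (at z)"
    unfolding jconj_def mat2_nth
    using c[OF H[THEN conjunct1]] m[OF H[THEN conjunct2, THEN conjunct1]]
      m[OF H[THEN conjunct2, THEN conjunct2, THEN conjunct1]]
      c[OF H[THEN conjunct2, THEN conjunct2, THEN conjunct2]] assms(3,4)[of z]
    by (intro conjI) (erule DERIV_cong; simp add: algebra_simps)+
qed

lemma gauge_system_invariants_has_derivative_zero:
  assumes "gauge_system d e H V" "gauge_system d e G V" "z \<in> V"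
    and f: "(f has_field_derivative d z * f z) (at z)" "f z \<noteq> 0"
  shows "((\<lambda>w. H w $ 2 $ 2 * G w $ 1 $ 1 - H w $ 1 $ 2 * G w $ 2 $ 1) has_field_derivative 0) (at z)"
    and "((\<lambda>w. H w $ 1 $ 1 * G w $ 2 $ 2 - H w $ 2 $ 1 * G w $ 1 $ 2) has_field_derivative 0) (at z)"
    and "((\<lambda>w. (H w $ 2 $ 2 * G w $ 1 $ 2 - H w $ 1 $ 2 * G w $ 2 $ 2) / f w) has_field_derivative 0) (at z)"
    and "((\<lambda>w. (H w $ 1 $ 1 * G w $ 2 $ 1 - H w $ 2 $ 1 * G w $ 1 $ 1) * f w) has_field_derivative 0) (at z)"
    and "((\<lambda>w. H w $ 1 $ 1 * H w $ 2 $ 2 - H w $ 1 $ 2 * H w $ 2 $ 1) has_field_derivative 0) (at z)"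
proof -
  note h = assms(1)[unfolded gauge_system_iff, rule_format, OF \<open>z \<in> V\<close>]
  note g = assms(2)[unfolded gauge_system_iff, rule_format, OF \<open>z \<in> V\<close>]
  show "((\<lambda>w. H w $ 2 $ 2 * G w $ 1 $ 1 - H w $ 1 $ 2 * G w $ 2 $ 1) has_field_derivative 0) (at z)"
    by (rule DERIV_cong[OF DERIV_diff[OF DERIV_mult DERIV_mult]]) (use h g in \<open>auto simp: algebra_simps\<close>)
  show "((\<lambda>w. H w $ 1 $ 1 * G w $ 2 $ 2 - H w $ 2 $ 1 * G w $ 1 $ 2) has_field_derivative 0) (at z)"
    by (rule DERIV_cong[OF DERIV_diff[OF DERIV_mult DERIV_mult]]) (use h g in \<open>auto simp: algebra_simps\<close>)
  show "((\<lambda>w. (H w $ 2 $ 2 * G w $ 1 $ 2 - H w $ 1 $ 2 * G w $ 2 $ 2) / f w) has_field_derivative 0) (at z)"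
    by (rule DERIV_cong[OF DERIV_divide[OF DERIV_diff[OF DERIV_mult DERIV_mult] f(1) f(2)]])
       (use h g f in \<open>auto simp: algebra_simps\<close>)
  show "((\<lambda>w. (H w $ 1 $ 1 * G w $ 2 $ 1 - H w $ 2 $ 1 * G w $ 1 $ 1) * f w) has_field_derivative 0) (at z)"
    by (rule DERIV_cong[OF DERIV_mult[OF DERIV_diff[OF DERIV_mult DERIV_mult] f(1)]])
       (use h g in \<open>auto simp: algebra_simps\<close>)
  show "((\<lambda>w. H w $ 1 $ 1 * H w $ 2 $ 2 - H w $ 1 $ 2 * H w $ 2 $ 1) has_field_derivative 0) (at z)"
    by (rule DERIV_cong[OF DERIV_diff[OF DERIV_mult DERIV_mult]]) (use h in \<open>auto simp: algebra_simps\<close>)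
qed

text \<open>The first four quantities are the entries of \<open>F\<inverse> adj(H) G F\<close> with \<open>F = diag(f, 1)\<close>:
  since \<open>H F\<close> and \<open>G F\<close> solve the same linear system \<open>W' = [[d, e], [e, 0]] W\<close>, this matrix and
  \<open>det H\<close> are constant.\<close>
lemma gauge_system_conserved:
  assumes "convex V" "gauge_system d e H V" "gauge_system d e G V"
    and f: "\<And>z. z \<in> V \<Longrightarrow> (f has_field_derivative d z * f z) (at z)" "\<And>z. z \<in> V \<Longrightarrow> f z \<noteq> 0"
  shows "\<exists>c. \<forall>z\<in>V. H z $ 2 $ 2 * G z $ 1 $ 1 - H z $ 1 $ 2 * G z $ 2 $ 1 = c"
    and "\<exists>c. \<forall>z\<in>V. H z $ 1 $ 1 * G z $ 2 $ 2 - H z $ 2 $ 1 * G z $ 1 $ 2 = c"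
    and "\<exists>c. \<forall>z\<in>V. (H z $ 2 $ 2 * G z $ 1 $ 2 - H z $ 1 $ 2 * G z $ 2 $ 2) / f z = c"
    and "\<exists>c. \<forall>z\<in>V. (H z $ 1 $ 1 * G z $ 2 $ 1 - H z $ 2 $ 1 * G z $ 1 $ 1) * f z = c"
    and "\<exists>c. \<forall>z\<in>V. H z $ 1 $ 1 * H z $ 2 $ 2 - H z $ 1 $ 2 * H z $ 2 $ 1 = c"
proof -
  have const: "\<exists>c. \<forall>z\<in>V. q z = c" if "\<And>z. z \<in> V \<Longrightarrow> (q has_field_derivative 0) (at z)" for q
    using assms(1) that by (intro has_field_derivative_zero_constant) (auto intro: has_field_derivative_at_within)
  note D = gauge_system_invariants_has_derivative_zero[OF assms(2,3) _ f(1) f(2)]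
  show "\<exists>c. \<forall>z\<in>V. H z $ 2 $ 2 * G z $ 1 $ 1 - H z $ 1 $ 2 * G z $ 2 $ 1 = c"
    by (rule const) (rule D(1))
  show "\<exists>c. \<forall>z\<in>V. H z $ 1 $ 1 * G z $ 2 $ 2 - H z $ 2 $ 1 * G z $ 1 $ 2 = c"
    by (rule const) (rule D(2))
  show "\<exists>c. \<forall>z\<in>V. (H z $ 2 $ 2 * G z $ 1 $ 2 - H z $ 1 $ 2 * G z $ 2 $ 2) / f z = c"
    by (rule const) (rule D(3))
  show "\<exists>c. \<forall>z\<in>V. (H z $ 1 $ 1 * G z $ 2 $ 1 - H z $ 2 $ 1 * G z $ 1 $ 1) * f z = c"
    by (rule const) (rule D(4))
  show "\<exists>c. \<forall>z\<in>V. H z $ 1 $ 1 * H z $ 2 $ 2 - H z $ 1 $ 2 * H z $ 2 $ 1 = c"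
    by (rule const) (rule D(5))
qed

lemma const_eq_zero_of_vanishing_factor:
  fixes N g :: "'a \<Rightarrow> 'b::real_normed_field"
  assumes "F \<noteq> bot" "(N \<longlongrightarrow> 0) F"
    and "\<forall>\<^sub>F x in F. norm (g x) \<le> B \<and> N x * g x = k"
  shows "k = 0"
proof -
  have "((\<lambda>x. N x * g x) \<longlongrightarrow> 0) F"
    by (rule tendsto_0_le[OF assms(2), of _ B]) (use assms(3) in \<open>auto elim!: eventually_mono
      simp: norm_mult intro!: mult_left_mono\<close>)
  moreover have "((\<lambda>x. N x * g x) \<longlongrightarrow> k) F"
    using assms(3) by (auto intro: tendsto_eventually elim: eventually_mono)
  ultimately show ?thesis using tendsto_unique[OF assms(1)] by blast
qed

lemma tendsto_zero_along_ray:
  fixes N :: "complex \<Rightarrow> complex"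
  assumes "continuous_on {z. Im z \<le> 0} N" "N 0 = 0"
  shows "((\<lambda>t. N (Complex (s * t) (- t))) \<longlongrightarrow> 0) (at_right 0)"
proof -
  have ray: "((\<lambda>t. Complex (s * t) (- t)) \<longlongrightarrow> 0) (at_right 0)"
    by (auto intro!: tendsto_eq_intros simp: zero_complex.ctr)
  have "\<forall>\<^sub>F t in at_right 0. Complex (s * t) (- t) \<in> {z. Im z \<le> 0}"
    using eventually_at_right_less by (rule eventually_mono) simp
  hence "((\<lambda>t. N (Complex (s * t) (- t))) \<longlongrightarrow> N 0) (at_right 0)"
    by (rule continuous_on_tendsto_compose[OF assms(1) ray, rotated]) simp
  thus ?thesis using assms(2) by simp
qed

lemma eventually_at_right_le_half: "\<forall>\<^sub>F t in at_right (0::real). 0 < t \<and> t \<le> 1/2"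
  unfolding eventually_at_right_field by (intro exI[of _ "1/2"]) auto

lemma const_eq_zero_of_div_expf:
  assumes "\<mu> > 0" "continuous_on {z. Im z \<le> 0} N" "N 0 = 0"
    and "\<forall>z\<in>{z. Im z < 0}. N z / expf l \<mu> z = k"
  shows "k = 0"
proof (rule const_eq_zero_of_vanishing_factor)
  show "((\<lambda>t. N (Complex (1 * t) (- t))) \<longlongrightarrow> 0) (at_right 0)"
    using assms(2,3) by (rule tendsto_zero_along_ray)
  show "\<forall>\<^sub>F t in at_right 0. norm (inverse (expf l \<mu> (Complex t (-t)))) \<le> exp \<mu> \<and>
      N (Complex (1 * t) (- t)) * inverse (expf l \<mu> (Complex t (-t))) = k"
    using eventually_at_right_le_half
  proof (rule eventually_mono)
    fix t :: real assume t: "0 < t \<and> t \<le> 1/2"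
    hence "exp (- \<mu>) \<le> norm (expf l \<mu> (Complex t (-t)))"
      using \<open>\<mu> > 0\<close> by (intro norm_expf_fourth_quadrant_ge) auto
    hence "norm (inverse (expf l \<mu> (Complex t (-t)))) \<le> exp \<mu>"
      using le_imp_inverse_le[OF _ exp_gt_zero] by (metis exp_minus inverse_inverse_eq norm_inverse)
    moreover have "N (Complex t (-t)) / expf l \<mu> (Complex t (-t)) = k"
      using bspec[OF assms(4), of "Complex t (-t)"] t by simp
    ultimately show "norm (inverse (expf l \<mu> (Complex t (-t)))) \<le> exp \<mu> \<and>
      N (Complex (1 * t) (- t)) * inverse (expf l \<mu> (Complex t (-t))) = k"
      by (simp only: mult_1 divide_inverse)
  qed
qed simp

lemma const_eq_zero_of_mult_expf:
  assumes "\<mu> > 0" "continuous_on {z. Im z \<le> 0} N" "N 0 = 0"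
    and "\<forall>z\<in>{z. Im z < 0}. N z * expf l \<mu> z = k"
  shows "k = 0"
proof (rule const_eq_zero_of_vanishing_factor)
  show "((\<lambda>t. N (Complex (- 1 * t) (- t))) \<longlongrightarrow> 0) (at_right 0)"
    using assms(2,3) by (rule tendsto_zero_along_ray)
  show "\<forall>\<^sub>F t in at_right 0. norm (expf l \<mu> (Complex (-t) (-t))) \<le> exp \<mu> * fact l * (2/\<mu>) ^ l \<and>
      N (Complex (- 1 * t) (- t)) * expf l \<mu> (Complex (-t) (-t)) = k"
    using eventually_at_right_le_half
  proof (rule eventually_mono)
    fix t :: real assume t: "0 < t \<and> t \<le> 1/2"
    hence "norm (expf l \<mu> (Complex (-t) (-t))) \<le> exp \<mu> * fact l * (2/\<mu>) ^ l"
      using \<open>\<mu> > 0\<close> by (intro norm_expf_third_quadrant_le) auto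
    moreover have "N (Complex (-t) (-t)) * expf l \<mu> (Complex (-t) (-t)) = k"
      using bspec[OF assms(4), of "Complex (-t) (-t)"] t by simp
    ultimately show "norm (expf l \<mu> (Complex (-t) (-t))) \<le> exp \<mu> * fact l * (2/\<mu>) ^ l \<and>
      N (Complex (- 1 * t) (- t)) * expf l \<mu> (Complex (-t) (-t)) = k"
      by (simp only: mult_minus1)
  qed
qed simp

text \<open>The conserved quantities are evaluated at the boundary point \<open>0\<close>. Those carrying a factor
  \<open>f\<^sup>\<plusminus>\<^sup>1\<close> vanish, because \<open>f\<^sup>\<plusminus>\<^sup>1\<close> stays bounded along a ray into \<open>0\<close> on which the cofactor tends
  to \<open>0\<close>: \<open>1/f\<close> in the fourth quadrant, \<open>f\<close> in the third.\<close>
lemma gauge_system_unique_lower_halfplane: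
  fixes H G :: "complex \<Rightarrow> complex^2^2"
  assumes "\<mu> > 0"
    and sysH: "gauge_system (diag_coeff l \<mu>) e H {z. Im z < 0}"
    and sysG: "gauge_system (diag_coeff l \<mu>) e G {z. Im z < 0}"
    and contH: "continuous_on {z. Im z \<le> 0} H" and contG: "continuous_on {z. Im z \<le> 0} G"
    and "H 0 = mat 1" "G 0 = mat 1" and "Im z < 0"
  shows "G z = H z"
proof -
  define L where "L = {z::complex. Im z < 0}"
  have clL: "closure L = {z. Im z \<le> 0}" unfolding L_def by (rule closure_lower_halfplane)
  have expf_L: "(expf l \<mu> has_field_derivative diag_coeff l \<mu> w * expf l \<mu> w) (at w)"
    "expf l \<mu> w \<noteq> 0" if "w \<in> L" for w
    using that expf_has_field_derivative[of w] expf_nonzero[of w] by (force simp: L_def)+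
  have "convex L" unfolding L_def by (rule convex_halfspace_Im_lt)
  note conserved = gauge_system_conserved[OF this sysH[folded L_def] sysG[folded L_def] expf_L]
  obtain c11 c22 k12 k21 dH where
    c11: "\<forall>z\<in>L. H z $ 2 $ 2 * G z $ 1 $ 1 - H z $ 1 $ 2 * G z $ 2 $ 1 = c11" and
    c22: "\<forall>z\<in>L. H z $ 1 $ 1 * G z $ 2 $ 2 - H z $ 2 $ 1 * G z $ 1 $ 2 = c22" and
    k12: "\<forall>z\<in>L. (H z $ 2 $ 2 * G z $ 1 $ 2 - H z $ 1 $ 2 * G z $ 2 $ 2) / expf l \<mu> z = k12" and
    k21: "\<forall>z\<in>L. (H z $ 1 $ 1 * G z $ 2 $ 1 - H z $ 2 $ 1 * G z $ 1 $ 1) * expf l \<mu> z = k21" and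
    dH: "\<forall>z\<in>L. H z $ 1 $ 1 * H z $ 2 $ 2 - H z $ 1 $ 2 * H z $ 2 $ 1 = dH"
    using conserved by meson
  have cont: "continuous_on (closure L) (\<lambda>z. H z $ i $ j)" "continuous_on (closure L) (\<lambda>z. G z $ i $ j)"
    for i j using contH contG unfolding clL by (auto intro!: continuous_intros)
  have "0 \<in> closure L" by (simp add: clL)
  have at_zero: "c = q 0" if "continuous_on (closure L) q" "\<forall>w\<in>L. q w = c"
    for q :: "complex \<Rightarrow> complex" and c
    using continuous_constant_on_closure[OF that(1) _ \<open>0 \<in> closure L\<close>] that(2) by simp
  have I: "H 0 $ 1 $ 1 = 1" "H 0 $ 1 $ 2 = 0" "H 0 $ 2 $ 1 = 0" "H 0 $ 2 $ 2 = 1"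
    "G 0 $ 1 $ 1 = 1" "G 0 $ 1 $ 2 = 0" "G 0 $ 2 $ 1 = 0" "G 0 $ 2 $ 2 = 1"
    using assms(6,7) by (simp_all add: mat2_one)
  have "c11 = 1" "c22 = 1" "dH = 1"
    using at_zero[OF _ c11] at_zero[OF _ c22] at_zero[OF _ dH]
    by (simp_all add: I cont continuous_intros)
  moreover have "k12 = 0"
  proof (rule const_eq_zero_of_div_expf[OF \<open>\<mu> > 0\<close> _ _ k12[unfolded L_def]])
    show "continuous_on {z. Im z \<le> 0} (\<lambda>z. H z $ 2 $ 2 * G z $ 1 $ 2 - H z $ 1 $ 2 * G z $ 2 $ 2)"
      unfolding clL[symmetric] by (intro continuous_intros cont)
  qed (simp add: I)
  moreover have "k21 = 0"
  proof (rule const_eq_zero_of_mult_expf[OF \<open>\<mu> > 0\<close> _ _ k21[unfolded L_def]])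
    show "continuous_on {z. Im z \<le> 0} (\<lambda>z. H z $ 1 $ 1 * G z $ 2 $ 1 - H z $ 2 $ 1 * G z $ 1 $ 1)"
      unfolding clL[symmetric] by (intro continuous_intros cont)
  qed (simp add: I)
  ultimately show ?thesis
    using \<open>Im z < 0\<close> c11 c22 k12 k21 dH expf_L(2)[of z]
    by (intro eq_of_adjugate_pairings) (auto simp: L_def)
qed

lemma gauge_system_unique_closed_lower_halfplane:
  fixes H G :: "complex \<Rightarrow> complex^2^2"
  assumes "\<mu> > 0"
    and "gauge_system (diag_coeff l \<mu>) e H {z. Im z < 0}" "gauge_system (diag_coeff l \<mu>) e G {z. Im z < 0}"
    and "continuous_on {z. Im z \<le> 0} H" "continuous_on {z. Im z \<le> 0} G"
    and "H 0 = mat 1" "G 0 = mat 1" and "Im z \<le> 0"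
  shows "G z = H z"
proof -
  have "continuous_on (closure {z. Im z < 0}) (\<lambda>w. G w - H w)"
    unfolding closure_lower_halfplane by (rule continuous_on_diff[OF assms(5,4)])
  moreover have "G w - H w = 0" if "w \<in> {z. Im z < 0}" for w
    using gauge_system_unique_lower_halfplane[OF assms(1-7)] that by simp
  moreover have "z \<in> closure {z. Im z < 0}" using assms(8) by (simp add: closure_lower_halfplane)
  ultimately have "(\<lambda>w. G w - H w) z = 0" by (rule continuous_constant_on_closure)
  thus ?thesis by simp
qed

definition matrix_holomorphic_on :: "(complex \<Rightarrow> complex^2^2) \<Rightarrow> complex set \<Rightarrow> bool" where
  "matrix_holomorphic_on A T \<longleftrightarrow> (\<forall>i j. (\<lambda>z. A z $ i $ j) holomorphic_on T)"

lemma matrix_holomorphic_on_mult: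
  "matrix_holomorphic_on A T \<Longrightarrow> matrix_holomorphic_on B T \<Longrightarrow> matrix_holomorphic_on (\<lambda>z. A z ** B z) T"
  unfolding matrix_holomorphic_on_def matrix_matrix_mult_def by (auto simp: sum_2 intro!: holomorphic_intros)

lemma matrix_holomorphic_on_const: "matrix_holomorphic_on (\<lambda>z. M) T"
  unfolding matrix_holomorphic_on_def by auto

lemma matrix_holomorphic_on_Fmat: "0 \<notin> T \<Longrightarrow> matrix_holomorphic_on (Fmat l \<mu>) T"
  unfolding matrix_holomorphic_on_def Fmat_def mat2_def
  by (auto simp: forall_2 intro: expf_holomorphic_on)

lemma normalizing_matrix_holomorphic_on:
  "normalizing \<omega> l \<mu> S H \<Longrightarrow> T \<subseteq> S \<Longrightarrow> matrix_holomorphic_on H T"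
  unfolding matrix_holomorphic_on_def normalizing_def by (auto intro: holomorphic_on_subset)

lemma invI_eq: "invI l \<mu> W z = mat2 0 (\<i> * expf l \<mu> z) (- \<i> * expf l \<mu> z) 0 ** W (1 / z)"
  by (subst mat2_eta[of "W (1 / z)"]) (simp add: invI_def mat2_mult vec_eq_iff forall_2)

lemma matrix_holomorphic_on_invI:
  assumes "matrix_holomorphic_on W S" "\<And>z. z \<in> T \<Longrightarrow> 1 / z \<in> S" "0 \<notin> T"
  shows "matrix_holomorphic_on (invI l \<mu> W) T"
  unfolding matrix_holomorphic_on_def
proof (intro allI)
  fix i j :: 2
  have "(\<lambda>z. 1 / z) holomorphic_on T" using assms(3) by (auto intro!: holomorphic_intros)
  moreover have "(\<lambda>z. 1 / z) ` T \<subseteq> S" using assms(2) by auto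
  ultimately have "((\<lambda>w. W w $ k $ j) \<circ> (\<lambda>z. 1 / z)) holomorphic_on T" for k
    using assms(1) unfolding matrix_holomorphic_on_def by (intro holomorphic_on_compose_gen) auto
  hence hW: "(\<lambda>z. W (1 / z) $ k $ j) holomorphic_on T" for k by (simp add: o_def)
  note hf = expf_holomorphic_on[OF assms(3), of l \<mu>]
  have entry: "invI l \<mu> W z $ i $ j = (if i = 1 then \<i> * expf l \<mu> z * W (1 / z) $ 2 $ j
      else - \<i> * expf l \<mu> z * W (1 / z) $ 1 $ j)" for z
    by (simp add: invI_def)
  show "(\<lambda>z. invI l \<mu> W z $ i $ j) holomorphic_on T"
  proof (cases "i = 1")
    case True
    show ?thesis unfolding entry if_P[OF True] by (intro holomorphic_intros hf hW)
  next
    case False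
    show ?thesis unfolding entry if_not_P[OF False] by (intro holomorphic_intros hf hW)
  qed
qed

lemma matrix_holomorphic_eq_on_connected:
  assumes A: "matrix_holomorphic_on A T" and B: "matrix_holomorphic_on B T"
    and T: "open T" "connected T" and U: "open U" "U \<noteq> {}" "U \<subseteq> T"
    and eq: "\<And>z. z \<in> U \<Longrightarrow> A z = B z" and "w \<in> T"
  shows "A w = B w"
proof -
  have "A w $ i $ j = B w $ i $ j" for i j
  proof (rule analytic_continuation_open[OF U(1) T(1) U(2) T(2) U(3),
        where f = "\<lambda>z. A z $ i $ j" and g = "\<lambda>z. B z $ i $ j"])
    show "(\<lambda>z. A z $ i $ j) holomorphic_on T" "(\<lambda>z. B z $ i $ j) holomorphic_on T"
      using A B by (simp_all add: matrix_holomorphic_on_def)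
  qed (simp_all add: eq \<open>w \<in> T\<close>)
  thus ?thesis by (simp add: vec_eq_iff)
qed

lemma monodromyN_eq_one: "monodromyN l = mat 1"
proof -
  have "exp (- 2 * of_real pi * \<i> * of_nat l) = exp (- (2 * of_real pi * \<i>)) ^ l"
    by (simp add: exp_of_nat_mult[symmetric] mult_ac)
  also have "exp (- (2 * of_real pi * \<i>)) = (1::complex)" by (simp add: exp_minus)
  finally show ?thesis by (simp add: monodromyN_def mat2_one)
qed

section \<open>Algebra of the Stokes data\<close>

lemma involution_matrix_det_and_reality:
  fixes Y :: "complex^2^2"
  assumes "det Y \<noteq> 0"
    and inv: "Y = (mat2 0 \<i> (- \<i>) 0 ** Y) ** mat2 (- a) b (- c) a"
    and stokes: "Y = jconj Y ** mat2 1 0 c1 1"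
  shows "a\<^sup>2 - b * c = 1" and "c1 * b + a = cnj a"
proof -
  let ?K = "mat2 0 \<i> (- \<i>) 0" and ?Q = "mat2 (- a) b (- c) a"
  let ?C = "mat2 1 0 c1 1" and ?C' = "mat2 1 0 (- c1) 1"
  have "det Y * 1 = det Y * (a\<^sup>2 - b * c)"
    using arg_cong[OF inv, of det] by (simp add: det_mul det_mat2 power2_eq_square algebra_simps)
  thus "a\<^sup>2 - b * c = 1" using \<open>det Y \<noteq> 0\<close> mult_left_cancel by metis
  have C_inv: "?C ** ?C' = mat 1" "?C' ** ?C = mat 1" by (simp_all add: mat2_mult mat2_one)
  have "jconj Y = Y ** ?C'"
    using arg_cong[OF stokes, of "\<lambda>M. M ** ?C'"] by (simp add: matrix_mul_assoc[symmetric] C_inv)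
  moreover have "jconj Y = (?K ** jconj Y) ** jconj ?Q"
    using arg_cong[OF inv, of jconj] by (simp add: jconj_mult jconj_mat2)
  ultimately have "Y ** ?C' = (?K ** (Y ** ?C')) ** jconj ?Q" by simp
  hence "(Y ** ?C') ** ?C = ((?K ** (Y ** ?C')) ** jconj ?Q) ** ?C" by simp
  hence "Y = (?K ** Y) ** (?C' ** jconj ?Q ** ?C)"
    by (simp add: matrix_mul_assoc[symmetric] C_inv)
  with inv have "(?K ** Y) ** ?Q = (?K ** Y) ** (?C' ** jconj ?Q ** ?C)" by (rule subst)
  moreover have "det (?K ** Y) \<noteq> 0" using \<open>det Y \<noteq> 0\<close> by (simp add: det_mul det_mat2)
  ultimately have "?Q = ?C' ** jconj ?Q ** ?C" by (rule matrix_mult_left_cancel[rotated])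
  hence "b = - cnj b" "a = c1 * cnj b + cnj a"
    by (simp_all add: jconj_mat2 mat2_mult mat2_eq_iff algebra_simps)
  thus "c1 * b + a = cnj a" by (metis add_minus_cancel minus_minus mult_minus_right)
qed

lemma trace_eq_zero_of_similar_antidiagonal:
  fixes X M :: "complex^2^2"
  assumes "det X \<noteq> 0" "X ** M = mat2 0 p q 0 ** X"
  shows "M $ 1 $ 1 + M $ 2 $ 2 = 0"
proof -
  obtain x1 x2 x3 x4 where X: "X = mat2 x1 x2 x3 x4" using mat2_eta by blast
  obtain m1 m2 m3 m4 where M: "M = mat2 m1 m2 m3 m4" using mat2_eta by blast
  have e: "x1*m1 + x2*m3 = p*x3" "x1*m2 + x2*m4 = p*x4" "x3*m1 + x4*m3 = q*x1" "x3*m2 + x4*m4 = q*x2"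
    using assms(2) by (simp_all add: X M mat2_mult mat2_eq_iff)
  have "(x1*x4 - x2*x3) * (m1 + m4) =
      x4*(x1*m1 + x2*m3) - x2*(x3*m1 + x4*m3) - x3*(x1*m2 + x2*m4) + x1*(x3*m2 + x4*m4)"
    by (simp add: algebra_simps)
  also have "\<dots> = 0" unfolding e by (simp add: algebra_simps)
  finally show ?thesis using assms(1) by (simp add: X M det_mat2)
qed

lemma stokes_discriminant_nonpos:
  fixes a b c c0 c1 :: complex
  assumes det: "a\<^sup>2 - b * c = 1" and trace: "- c0 * c1 * a - c0 * c + c1 * b = 0"
    and real: "c1 * b + a = cnj a" and "c0 \<noteq> 0"
  shows "let \<beta> = - \<i> * b; \<sigma> = c1 / c0; \<Delta>0 = \<beta>\<^sup>2 * (4 * \<sigma> + c1\<^sup>2) - 4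
         in Im \<Delta>0 = 0 \<and> Re \<Delta>0 \<le> 0"
proof -
  have "c1 * b = c0 * (c + c1 * a)" using trace by (simp add: algebra_simps)
  hence "b * c1 * b = c0 * (b * c + c1 * a * b)" by algebra
  hence "b * c1 * b / c0 = b * c + c1 * a * b" using \<open>c0 \<noteq> 0\<close> by (simp add: divide_eq_eq mult.commute)
  have "(- \<i> * b)\<^sup>2 * (4 * (c1 / c0) + c1\<^sup>2) - 4 = - 4 * (b * c1 * b / c0) - b\<^sup>2 * c1\<^sup>2 - 4"
    by (simp add: power2_eq_square field_simps)
  also have "\<dots> = - 4 * (b * c + c1 * a * b) - b\<^sup>2 * c1\<^sup>2 - 4"
    unfolding \<open>b * c1 * b / c0 = b * c + c1 * a * b\<close> ..
  also have "\<dots> = - (a + (c1 * b + a))\<^sup>2"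
    using det by algebra
  also have "a + (c1 * b + a) = of_real (2 * Re a)"
    unfolding real by (simp add: complex_add_cnj)
  finally have "(- \<i> * b)\<^sup>2 * (4 * (c1 / c0) + c1\<^sup>2) - 4 = - of_real ((2 * Re a)\<^sup>2)" by simp
  thus ?thesis unfolding Let_def by simp
qed

section \<open>The Stokes data of (L)\<close>

locale stokes_data =
  fixes \<omega> \<mu> :: real and l :: nat
    and Sp Sm :: "complex set" and Hp Hm :: "complex \<Rightarrow> complex^2^2"
    and c0 c1 a b c :: complex
  assumes mu_pos: "\<mu> > 0"
    and admissible: "admissible_Splus Sp" and Sm_eq: "Sm = cnj ` Sp"
    and normalizing_p: "normalizing \<omega> l \<mu> Sp Hp" and normalizing_m: "normalizing \<omega> l \<mu> Sm Hm"
    and stokes_0: "\<forall>z \<in> connected_component_set (Sp \<inter> Sm) (-1).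
           Hm z ** Fmat l \<mu> z = (Hp z ** Fmat l \<mu> z) ** mat2 1 c0 0 1"
    and stokes_1: "\<forall>z \<in> connected_component_set (Sp \<inter> Sm) 1.
           Hp z ** Fmat l \<mu> z = (Hm z ** Fmat l \<mu> z) ** mat2 1 0 c1 1"
    and involution: "\<forall>z \<in> connected_component_set (Sp \<inter> Sm) 1.
           (Hp z ** Fmat l \<mu> z) ** monodromyN l
             = invI l \<mu> (\<lambda>w. (Hp w ** Fmat l \<mu> w) ** monodromyN l) z ** mat2 (- a) b (- c) a"
begin

abbreviation Wp :: "complex \<Rightarrow> complex^2^2" where "Wp z \<equiv> Hp z ** Fmat l \<mu> z"
abbreviation Wm :: "complex \<Rightarrow> complex^2^2" where "Wm z \<equiv> Hm z ** Fmat l \<mu> z"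

lemma sector_Sp: "is_sector Sp"
  using admissible by (simp add: admissible_Splus_def)

lemma mem_Sm_iff: "z \<in> Sm \<longleftrightarrow> cnj z \<in> Sp"
proof
  show "z \<in> Sm \<Longrightarrow> cnj z \<in> Sp" unfolding Sm_eq by auto
  show "cnj z \<in> Sp \<Longrightarrow> z \<in> Sm" unfolding Sm_eq using image_eqI[of z cnj "cnj z"] by simp
qed

lemma open_Sp: "open Sp" and open_Sm: "open Sm"
proof -
  show "open Sp" using sector_Sp by (rule is_sector_open)
  moreover have "Sm = cnj -` Sp" using mem_Sm_iff by auto
  ultimately show "open Sm" by (simp add: continuous_open_vimage continuous_intros)
qed

lemma upper_halfplane_subset_Sp: "{z. Im z > 0} \<subseteq> Sp"
  and lower_halfplane_subset_Sm: "{z. Im z < 0} \<subseteq> Sm"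
  and one_mem: "1 \<in> Sp \<inter> Sm" and minus_one_mem: "-1 \<in> Sp \<inter> Sm"
proof -
  have U: "{z. Im z \<ge> 0 \<and> z \<noteq> 0} \<subseteq> Sp"
    using admissible by (simp add: admissible_Splus_def)
  show "{z. Im z > 0} \<subseteq> Sp" using U by auto
  show "{z. Im z < 0} \<subseteq> Sm" using U by (force simp: mem_Sm_iff)
  show "1 \<in> Sp \<inter> Sm" "-1 \<in> Sp \<inter> Sm" using U by (auto simp: mem_Sm_iff)
qed

lemma Hm_eq_jconj:
  assumes "Im z \<le> 0"
  shows "Hm z = jconj (Hp (cnj z))"
proof -
  have cHp: "continuous_on (closure Sp) Hp" and cHm: "continuous_on (closure Sm) Hm"
    using normalizing_p normalizing_m by (simp_all add: normalizing_def)
  have "cnj ` {z. Im z \<le> 0} \<subseteq> closure Sp"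
    using closure_mono[OF upper_halfplane_subset_Sp] by (auto simp: closure_upper_halfplane)
  hence "continuous_on {z. Im z \<le> 0} (\<lambda>z. Hp (cnj z))"
    by (rule continuous_on_compose2[OF cHp continuous_on_cnj[OF continuous_on_id]])
  hence cont_p: "continuous_on {z. Im z \<le> 0} (\<lambda>z. jconj (Hp (cnj z)))"
    by (rule continuous_on_jconj)
  have "{z. Im z \<le> 0} \<subseteq> closure Sm"
    using closure_mono[OF lower_halfplane_subset_Sm] by (simp add: closure_lower_halfplane)
  with cHm have cont_m: "continuous_on {z. Im z \<le> 0} Hm"
    by (rule continuous_on_subset)
  have "jconj (Hp (cnj z)) = Hm z"
  proof (rule gauge_system_unique_closed_lower_halfplane[OF mu_pos, where H = Hm and G = "\<lambda>z. jconj (Hp (cnj z))"])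
    show "gauge_system (diag_coeff l \<mu>) (offdiag_coeff \<omega>) Hm {z. Im z < 0}"
      by (rule normalizing_gauge_system[OF normalizing_m open_halfspace_Im_lt lower_halfplane_subset_Sm])
    show "gauge_system (diag_coeff l \<mu>) (offdiag_coeff \<omega>) (\<lambda>z. jconj (Hp (cnj z))) {z. Im z < 0}"
      by (rule gauge_system_reflect[OF normalizing_gauge_system[OF normalizing_p open_halfspace_Im_gt
          upper_halfplane_subset_Sp]]) (simp_all add: cnj_diag_coeff cnj_offdiag_coeff)
    show "Hm 0 = mat 1" "jconj (Hp (cnj 0)) = mat 1"
      using normalizing_p normalizing_m by (simp_all add: normalizing_def jconj_one)
  qed (use cont_p cont_m assms in auto)
  thus ?thesis by simp
qed

lemma involution_continues_to_minus_one:
  "invI l \<mu> Wp (-1) ** mat2 (- a) b (- c) a = Wm (-1) ** mat2 1 0 c1 1"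
proof -
  have "open (Sp \<inter> Sm)" using open_Sp open_Sm by blast
  then obtain r1 r2 where r: "r1 > 0" "ball 1 r1 \<subseteq> Sp \<inter> Sm" "r2 > 0" "ball (-1) r2 \<subseteq> Sp \<inter> Sm"
    using one_mem minus_one_mem open_contains_ball by metis
  define T where "T = ({z. Im z < 0} \<union> ball 1 r1) \<union> ({z. Im z < 0} \<union> ball (-1) r2)"
  have "open T" by (auto simp: T_def intro: open_halfspace_Im_lt)
  have "- \<i> \<in> ({z. Im z < 0} \<union> ball 1 r1) \<inter> ({z. Im z < 0} \<union> ball (-1) r2)" by simp
  have "connected T" unfolding T_def
  proof (rule connected_Un[OF connected_lower_halfplane_Un_ball connected_lower_halfplane_Un_ball])
    show "({z. Im z < 0} \<union> ball 1 r1) \<inter> ({z. Im z < 0} \<union> ball (-1) r2) \<noteq> {}"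
      using \<open>- \<i> \<in> _\<close> by blast
  qed (use r in auto)
  have "T \<subseteq> Sm" using r lower_halfplane_subset_Sm by (auto simp: T_def)
  have "0 \<notin> Sp" "0 \<notin> T"
    using zero_notin_sector[OF sector_Sp] \<open>T \<subseteq> Sm\<close> mem_Sm_iff by auto
  have "1 / z \<in> Sp" if "z \<in> T" for z
    using that \<open>T \<subseteq> Sm\<close> by (intro inverse_mem_sector[OF sector_Sp]) (auto simp: mem_Sm_iff)
  moreover have "matrix_holomorphic_on Wp Sp"
    using matrix_holomorphic_on_mult[OF normalizing_matrix_holomorphic_on[OF normalizing_p order_refl]
        matrix_holomorphic_on_Fmat[OF \<open>0 \<notin> Sp\<close>]] .
  ultimately have "matrix_holomorphic_on (invI l \<mu> Wp) T"
    using \<open>0 \<notin> T\<close> by (intro matrix_holomorphic_on_invI) auto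
  hence hol_p: "matrix_holomorphic_on (\<lambda>z. invI l \<mu> Wp z ** mat2 (- a) b (- c) a) T"
    by (rule matrix_holomorphic_on_mult[OF _ matrix_holomorphic_on_const])
  have hol_m: "matrix_holomorphic_on (\<lambda>z. Wm z ** mat2 1 0 c1 1) T"
    using matrix_holomorphic_on_mult[OF normalizing_matrix_holomorphic_on[OF normalizing_m \<open>T \<subseteq> Sm\<close>]
        matrix_holomorphic_on_Fmat[OF \<open>0 \<notin> T\<close>]]
    by (rule matrix_holomorphic_on_mult[OF _ matrix_holomorphic_on_const])
  have "ball 1 r1 \<subseteq> connected_component_set (Sp \<inter> Sm) 1"
    using r by (intro connected_component_maximal) auto
  hence "invI l \<mu> Wp z ** mat2 (- a) b (- c) a = Wm z ** mat2 1 0 c1 1" if "z \<in> ball 1 r1" for z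
    using bspec[OF stokes_1, of z] bspec[OF involution, of z] that by (auto simp: monodromyN_eq_one)
  thus ?thesis
    by (rule matrix_holomorphic_eq_on_connected[OF hol_p hol_m \<open>open T\<close> \<open>connected T\<close>,
          where U = "ball 1 r1", rotated 3])
       (use r in \<open>auto simp: T_def\<close>)
qed

lemma det_Q: "a\<^sup>2 - b * c = 1" and reality: "c1 * b + a = cnj a"
proof -
  have "1 \<in> connected_component_set (Sp \<inter> Sm) 1" using one_mem by simp
  note at_one = bspec[OF stokes_1 this] bspec[OF involution this]
  have "Fmat l \<mu> 1 = mat 1" by (simp add: Fmat_def expf_one mat2_one)
  moreover have "Hm 1 = jconj (Hp 1)" using Hm_eq_jconj[of 1] by simp
  moreover have "invI l \<mu> Wp 1 = mat2 0 \<i> (- \<i>) 0 ** Wp 1" by (simp add: invI_eq expf_one)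
  ultimately have "Hp 1 = (mat2 0 \<i> (- \<i>) 0 ** Hp 1) ** mat2 (- a) b (- c) a"
    "Hp 1 = jconj (Hp 1) ** mat2 1 0 c1 1"
    using at_one by (simp_all add: monodromyN_eq_one)
  moreover have "det (Hp 1) \<noteq> 0"
    using normalizing_p one_mem by (simp add: normalizing_def invertible_det_nz)
  ultimately show "a\<^sup>2 - b * c = 1" "c1 * b + a = cnj a"
    using involution_matrix_det_and_reality by blast+
qed

lemma trace_relation: "- c0 * c1 * a - c0 * c + c1 * b = 0"
proof -
  let ?Q = "mat2 (- a) b (- c) a" and ?C0 = "mat2 1 c0 0 1" and ?C1 = "mat2 1 0 c1 1"
  have "?Q ** ?Q = mat 1" using det_Q by (simp add: mat2_mult mat2_one power2_eq_square algebra_simps)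
  have "-1 \<in> connected_component_set (Sp \<inter> Sm) (-1)" using minus_one_mem by simp
  hence "Wp (-1) ** (?C0 ** ?C1 ** ?Q) = (Wm (-1) ** ?C1) ** ?Q"
    by (simp add: bspec[OF stokes_0] matrix_mul_assoc)
  also have "\<dots> = invI l \<mu> Wp (-1) ** (?Q ** ?Q)"
    by (simp add: involution_continues_to_minus_one[symmetric] matrix_mul_assoc)
  also have "\<dots> = invI l \<mu> Wp (-1)"
    by (simp add: \<open>?Q ** ?Q = mat 1\<close>)
  also have "\<dots> = mat2 0 (\<i> * expf l \<mu> (-1)) (- \<i> * expf l \<mu> (-1)) 0 ** Wp (-1)"
    by (simp add: invI_eq)
  finally have "(?C0 ** ?C1 ** ?Q) $ 1 $ 1 + (?C0 ** ?C1 ** ?Q) $ 2 $ 2 = 0"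
  proof (rule trace_eq_zero_of_similar_antidiagonal[rotated])
    have "det (Hp (-1)) \<noteq> 0"
      using normalizing_p minus_one_mem by (simp add: normalizing_def invertible_det_nz)
    thus "det (Wp (-1)) \<noteq> 0" by (simp add: det_mul Fmat_def det_mat2 expf_nonzero)
  qed
  thus ?thesis by (simp add: mat2_mult algebra_simps)
qed

end

theorem mainTheorem16:
  fixes \<omega> \<mu> :: real and l :: nat
    and Sp Sm :: "complex set"
    and Hp Hm :: "complex \<Rightarrow> complex^2^2"
    and c0 c1 a b c :: complex
  assumes "\<omega> > 0" and "\<mu> > 0"
    and "admissible_Splus Sp" and "Sm = cnj ` Sp"
    and "normalizing \<omega> l \<mu> Sp Hp" and "normalizing \<omega> l \<mu> Sm Hm"
    and "\<forall>z \<in> connected_component_set (Sp \<inter> Sm) (-1).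
           Hm z ** Fmat l \<mu> z = (Hp z ** Fmat l \<mu> z) ** mat2 1 c0 0 1"
    and "\<forall>z \<in> connected_component_set (Sp \<inter> Sm) 1.
           Hp z ** Fmat l \<mu> z = (Hm z ** Fmat l \<mu> z) ** mat2 1 0 c1 1"
    and "\<forall>z \<in> connected_component_set (Sp \<inter> Sm) 1.
           (Hp z ** Fmat l \<mu> z) ** monodromyN l
             = invI l \<mu> (\<lambda>w. (Hp w ** Fmat l \<mu> w) ** monodromyN l) z ** mat2 (- a) b (- c) a"
    and "c0 \<noteq> 0"
  shows "let \<beta> = - \<i> * b; \<sigma> = c1 / c0; \<Delta>0 = \<beta>\<^sup>2 * (4 * \<sigma> + c1\<^sup>2) - 4
         in Im \<Delta>0 = 0 \<and> Re \<Delta>0 \<le> 0"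
proof -
  interpret stokes_data \<omega> \<mu> l Sp Sm Hp Hm c0 c1 a b c
    using assms(2-9) by unfold_locales
  show ?thesis
    using stokes_discriminant_nonpos[OF det_Q trace_relation reality \<open>c0 \<noteq> 0\<close>] .
qed

end
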